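(* Let $q \geq 1$ and $n \geq 5$ be integers. Let $G_{n} := (\mathbb{Z}/2\mathbb{Z})^{qn} \times (\mathbb{Z}/4\mathbb{Z})^{qn}$ and $H_{n} := (\mathbb{Z}/2\mathbb{Z})^{q(n-2)} \times (\mathbb{Z}/4\mathbb{Z})^{q(n+1)}$. Then Duplicator has a winning strategy in the $q$-ary count-free pebble game on $(G_n, H_n)$ with $qn/4$ pebble pairs.
   Context: The $q$-ary count-free $m$-pebble game on finite groups $G, H$ is played by Spoiler and Duplicator with $m$ pebble pairs $(p_i, p_i')$. If $|G| \neq |H|$, Spoiler wins immediately. Each round proceeds as follows: (1) Spoiler picks up $d$ pebble pairs, where $1 \le d \le q$; (2) the winning condition is checked; (3) Spoiler places the $d$ chosen pebbles from one side on $d$ elements of one of the groups (of his choice), and then Duplicator places the corresponding partner pebbles on $d$ elements of the other group. Winning condition: if $g_1, \ldots, g_m$ are the pebbled elements of $G$ and $h_1, \ldots, h_m$ the corresponding pebbled elements of $H$, Spoiler wins if the map $g_i \mapsto h_i$ does not extend to an isomorphism $\langle g_1, \ldots, g_m\rangle \to \langle h_1, \ldots, h_m\rangle$; otherwise play continues. Duplicator has a winning strategy if she can prevent Spoiler from ever winning, for any number of rounds. *)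

theory Defs
  imports "HOL-Algebra.Algebra"
begin

definition Z2Z4_group :: "nat \<Rightarrow> nat \<Rightarrow> (nat \<Rightarrow> int) monoid" where
  "Z2Z4_group a b = product_group {..<a+b} (\<lambda>i. integer_mod_group (if i < a then 2 else 4))"

(* A position of the m-pebble game: pebble pair i is either off the board (None) or
   placed with p_i on g and p_i' on h (Some (g, h)). *)
type_synonym ('a, 'b) pebble_pos = "nat \<Rightarrow> ('a \<times> 'b) option"

definition pebble_partial_iso ::
  "('a, 'c) monoid_scheme \<Rightarrow> ('b, 'd) monoid_scheme \<Rightarrow> ('a, 'b) pebble_pos \<Rightarrow> bool" where
  "pebble_partial_iso G H p =
    (let I = {i. p i \<noteq> None};
         g = (\<lambda>i. fst (the (p i)));
         h = (\<lambda>i. snd (the (p i)))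
     in \<exists>\<phi>. \<phi> \<in> iso (subgroup_generated G (g ` I)) (subgroup_generated H (h ` I))
            \<and> (\<forall>i\<in>I. \<phi> (g i) = h i))"

definition pick_up :: "('a, 'b) pebble_pos \<Rightarrow> nat set \<Rightarrow> ('a, 'b) pebble_pos" where
  "pick_up p D = (\<lambda>i. if i \<in> D then None else p i)"

definition place :: "('a, 'b) pebble_pos \<Rightarrow> nat set \<Rightarrow> (nat \<Rightarrow> 'a) \<Rightarrow> (nat \<Rightarrow> 'b) \<Rightarrow> ('a, 'b) pebble_pos" where
  "place p D a b = (\<lambda>i. if i \<in> D then Some (a i, b i) else p i)"

definition dup_invariant ::
  "nat \<Rightarrow> nat \<Rightarrow> ('a, 'c) monoid_scheme \<Rightarrow> ('b, 'd) monoid_scheme \<Rightarrow> ('a, 'b) pebble_pos set \<Rightarrow> bool" where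
  "dup_invariant q m G H S =
    (\<forall>p\<in>S. \<forall>D. D \<subseteq> {..<m} \<and> 1 \<le> card D \<and> card D \<le> q \<longrightarrow>
       pebble_partial_iso G H (pick_up p D)
       \<and> (\<forall>a. (\<forall>i\<in>D. a i \<in> carrier G) \<longrightarrow>
              (\<exists>b. (\<forall>i\<in>D. b i \<in> carrier H) \<and> place p D a b \<in> S))
       \<and> (\<forall>b. (\<forall>i\<in>D. b i \<in> carrier H) \<longrightarrow>
              (\<exists>a. (\<forall>i\<in>D. a i \<in> carrier G) \<and> place p D a b \<in> S)))"

(* Duplicator has a winning strategy in the q-ary count-free m-pebble game on (G, H):
   the groups have the same order (otherwise Spoiler wins immediately) and the initial
   position (no pebbles on the board) lies in some Duplicator-invariant set of positions. *)
definition duplicator_wins ::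
  "nat \<Rightarrow> nat \<Rightarrow> ('a, 'c) monoid_scheme \<Rightarrow> ('b, 'd) monoid_scheme \<Rightarrow> bool" where
  "duplicator_wins q m G H =
    (card (carrier G) = card (carrier H)
     \<and> (\<exists>S. (\<lambda>_. None) \<in> S \<and> dup_invariant q m G H S))"

end

theory Submission
  imports Defs
begin

text \<open>
  Duplicator keeps the pebbled tuples aligned: after suitable automorphisms \<sigma> of G and
  \<tau> of H, the pebbled elements of G are supported on a set T of coordinates and the
  pebbled elements of H are their copies along an order-preserving injection \<pi> of T into
  the coordinates of H. Then g i \<mapsto> h i extends to an isomorphism of the generated
  subgroups. Products of transvections x \<mapsto> x + (x t) c move any p elements onto at most p
  coordinates, so after a pick-up T can be shrunk to one coordinate per remaining pebble,
  and d newly placed elements can be moved onto at most d further coordinates without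
  disturbing the old ones. As long as the number m of pebble pairs is at most the number of
  coordinates of each order in each group, \<pi> extends to these new coordinates and
  Duplicator answers with the copies. For the groups of the theorem m = qn/4 \<le> q(n - 2), and
  both groups have order 2 ^ (3qn).
\<close>

lemma iso_in_carrier: "f \<in> iso G H \<Longrightarrow> x \<in> carrier G \<Longrightarrow> f x \<in> carrier H"
  by (auto simp: iso_def hom_def)

lemma iso_subgroup_generated_of_inj_on:
  assumes "group_hom G H f" "A \<subseteq> carrier G" "inj_on f (generate G A)"
  shows "f \<in> iso (subgroup_generated G A) (subgroup_generated H (f ` A))"
proof (rule isoI)
  show "f \<in> hom (subgroup_generated G A) (subgroup_generated H (f ` A))"
    using group_hom.hom_between_subgroups[OF assms(1), of A "f ` A"] by simp
  have "carrier (subgroup_generated G A) = generate G A"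
    using assms(2) by (simp add: carrier_subgroup_generated Int_absorb1)
  then show "bij_betw f (carrier (subgroup_generated G A)) (carrier (subgroup_generated H (f ` A)))"
    using assms group_hom.subgroup_generated_by_image[OF assms(1,2)] by (simp add: bij_betw_def)
qed

lemma mult_mod_eq_of_dvd:
  fixes a b c m :: int
  assumes "m dvd c * b"
  shows "(c * (a mod b)) mod m = (c * a) mod m"
  using assms by (metis mod_mod_cancel mult_mod_right)

subsection \<open>Products of cyclic groups\<close>

definition cyclic_product :: "nat set \<Rightarrow> (nat \<Rightarrow> nat) \<Rightarrow> (nat \<Rightarrow> int) monoid" where
  "cyclic_product I k = product_group I (\<lambda>i. integer_mod_group (k i))"

lemma group_cyclic_product: "group (cyclic_product I k)"
  by (simp add: cyclic_product_def)

lemma mult_cyclic_product: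
  "x \<otimes>\<^bsub>cyclic_product I k\<^esub> y = (\<lambda>i\<in>I. (x i + y i) mod int (k i))"
  by (simp add: cyclic_product_def)

lemma one_cyclic_product: "\<one>\<^bsub>cyclic_product I k\<^esub> = (\<lambda>i\<in>I. 0)"
  by (simp add: cyclic_product_def)

lemma carrier_cyclic_product:
  assumes "\<forall>i\<in>I. 0 < k i"
  shows "carrier (cyclic_product I k) = (\<Pi>\<^sub>E i\<in>I. {0..<int (k i)})"
  using assms by (auto simp: cyclic_product_def carrier_integer_mod_group intro!: PiE_cong)

lemma mem_cyclic_product:
  assumes "\<forall>i\<in>I. 0 < k i"
  shows "x \<in> carrier (cyclic_product I k) \<longleftrightarrow>
           (\<forall>i\<in>I. 0 \<le> x i \<and> x i < int (k i)) \<and> (\<forall>i. i \<notin> I \<longrightarrow> x i = undefined)"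
  by (auto simp: carrier_cyclic_product[OF assms] PiE_iff extensional_def)

lemma card_carrier_cyclic_product:
  assumes "finite I" "\<forall>i\<in>I. 0 < k i"
  shows "card (carrier (cyclic_product I k)) = (\<Prod>i\<in>I. k i)"
  using assms by (simp add: carrier_cyclic_product card_PiE)

lemma restrict_hom_cyclic_product:
  assumes "\<forall>i\<in>I. 0 < k i" "J \<subseteq> I"
  shows "(\<lambda>x. restrict x J) \<in> hom (cyclic_product I k) (cyclic_product J k)"
proof (rule homI)
  have "\<forall>i\<in>J. 0 < k i" using assms by blast
  then show "restrict x J \<in> carrier (cyclic_product J k)" if "x \<in> carrier (cyclic_product I k)" for x
    using that assms by (auto simp: carrier_cyclic_product)
qed (use assms in \<open>auto simp: mult_cyclic_product Int_absorb1 intro!: restrict_ext\<close>)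

lemma subgroup_vanishing_preimage:
  assumes "\<forall>i\<in>I. 0 < k i" "\<sigma> \<in> hom (cyclic_product I k) (cyclic_product I k)"
  shows "subgroup {x \<in> carrier (cyclic_product I k). \<forall>s\<in>I - T. \<sigma> x s = 0} (cyclic_product I k)"
proof -
  let ?G = "cyclic_product I k" and ?p = "\<lambda>x. restrict (\<sigma> x) (I - T)"
  have "(\<lambda>x. restrict x (I - T)) \<circ> \<sigma> \<in> hom ?G (cyclic_product (I - T) k)"
    using assms restrict_hom_cyclic_product[OF assms(1), of "I - T"] by (auto intro: hom_compose)
  then have "group_hom ?G (cyclic_product (I - T) k) ?p"
    by (simp add: o_def group_hom_def group_hom_axioms_def group_cyclic_product)
  then have "subgroup (kernel ?G (cyclic_product (I - T) k) ?p) ?G"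
    by (rule group_hom.subgroup_kernel)
  moreover have "kernel ?G (cyclic_product (I - T) k) ?p = {x \<in> carrier ?G. \<forall>s\<in>I - T. \<sigma> x s = 0}"
    by (auto simp: kernel_def one_cyclic_product fun_eq_iff)
  ultimately show ?thesis by simp
qed

subsection \<open>Coordinate embeddings and transport\<close>

definition coordinate_embedding ::
    "nat set \<Rightarrow> (nat \<Rightarrow> nat) \<Rightarrow> nat set \<Rightarrow> (nat \<Rightarrow> nat) \<Rightarrow> (nat \<Rightarrow> nat) \<Rightarrow> bool" where
  "coordinate_embedding C k J k' \<pi> \<longleftrightarrow> inj_on \<pi> C \<and> \<pi> ` C \<subseteq> J \<and> (\<forall>s\<in>C. k' (\<pi> s) = k s)"

lemma coordinate_embedding_subset:
  "coordinate_embedding C k J k' \<pi> \<Longrightarrow> U \<subseteq> C \<Longrightarrow> coordinate_embedding U k J k' \<pi>"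
  by (auto simp: coordinate_embedding_def intro: inj_on_subset)

lemma coordinate_embedding_extend:
  assumes "finite T" "finite U" "coordinate_embedding T k J k' \<pi>" "card (T \<union> U) \<le> m"
    and room: "\<forall>s\<in>U. m \<le> card {j\<in>J. k' j = k s}"
  shows "\<exists>\<pi>'. (\<forall>s\<in>T. \<pi>' s = \<pi> s) \<and> coordinate_embedding (T \<union> U) k J k' \<pi>'"
  using \<open>finite U\<close> \<open>card (T \<union> U) \<le> m\<close> room
proof (induction U rule: finite_induct)
  case empty
  then show ?case using assms(3) by auto
next
  case (insert u U)
  have "card (T \<union> U) \<le> card (T \<union> insert u U)"
    using assms(1) insert.hyps(1) by (intro card_mono) auto
  then obtain \<pi>' where \<pi>': "\<forall>s\<in>T. \<pi>' s = \<pi> s" "coordinate_embedding (T \<union> U) k J k' \<pi>'"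
    using insert by auto
  show ?case
  proof (cases "u \<in> T \<union> U")
    case True
    then show ?thesis using \<pi>' by (auto simp: insert_absorb)
  next
    case False
    have "card (\<pi>' ` (T \<union> U)) < card {j\<in>J. k' j = k u}"
      using card_image_le[of "T \<union> U" \<pi>'] insert False assms(1) by auto
    moreover have "finite (\<pi>' ` (T \<union> U))" using assms(1) insert.hyps(1) by simp
    ultimately have "\<not> {j\<in>J. k' j = k u} \<subseteq> \<pi>' ` (T \<union> U)"
      using card_mono leD by blast
    then obtain j where j: "j \<in> J" "k' j = k u" "j \<notin> \<pi>' ` (T \<union> U)" by blast
    have "coordinate_embedding (T \<union> insert u U) k J k' (\<pi>'(u := j))"
      using \<pi>'(2) j False by (auto simp: coordinate_embedding_def inj_on_fun_updI)
    moreover have "\<forall>s\<in>T. (\<pi>'(u := j)) s = \<pi> s" using \<pi>'(1) False by auto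
    ultimately show ?thesis by blast
  qed
qed

definition transport :: "nat set \<Rightarrow> nat set \<Rightarrow> (nat \<Rightarrow> nat) \<Rightarrow> (nat \<Rightarrow> int) \<Rightarrow> nat \<Rightarrow> int" where
  "transport C J \<pi> x = (\<lambda>j\<in>J. if j \<in> \<pi> ` C then x (inv_into C \<pi> j) else 0)"

lemma transport_at:
  assumes "inj_on \<pi> C" "\<pi> ` C \<subseteq> J" "s \<in> C"
  shows "transport C J \<pi> x (\<pi> s) = x s"
  using assms by (auto simp: transport_def)

lemma transport_hom:
  assumes "\<forall>i\<in>I. 0 < k i" "\<forall>j\<in>J. 0 < k' j" "C \<subseteq> I" "coordinate_embedding C k J k' \<pi>"
  shows "transport C J \<pi> \<in> hom (cyclic_product I k) (cyclic_product J k')"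
proof (rule homI)
  fix x assume "x \<in> carrier (cyclic_product I k)"
  then show "transport C J \<pi> x \<in> carrier (cyclic_product J k')"
    using assms by (auto simp: mem_cyclic_product coordinate_embedding_def transport_def)
next
  fix x y
  show "transport C J \<pi> (x \<otimes>\<^bsub>cyclic_product I k\<^esub> y) =
          transport C J \<pi> x \<otimes>\<^bsub>cyclic_product J k'\<^esub> transport C J \<pi> y"
  proof
    fix j
    show "transport C J \<pi> (x \<otimes>\<^bsub>cyclic_product I k\<^esub> y) j =
            (transport C J \<pi> x \<otimes>\<^bsub>cyclic_product J k'\<^esub> transport C J \<pi> y) j"
    proof (cases "j \<in> J \<and> j \<in> \<pi> ` C")
      case True
      then obtain s where "s \<in> C" "j = \<pi> s" by blast
      then show ?thesis
        using assms True by (auto simp: mult_cyclic_product coordinate_embedding_def transport_def)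
    qed (auto simp: mult_cyclic_product transport_def)
  qed
qed

lemma transport_inv_into:
  assumes "\<forall>i\<in>I. 0 < k i" "x \<in> carrier (cyclic_product I k)" "C \<subseteq> I"
    and "inj_on \<pi> C" "\<pi> ` C \<subseteq> J" "\<forall>s\<in>I - C. x s = 0"
  shows "transport (\<pi> ` C) I (inv_into C \<pi>) (transport C J \<pi> x) = x"
proof
  fix s
  show "transport (\<pi> ` C) I (inv_into C \<pi>) (transport C J \<pi> x) s = x s"
  proof (cases "s \<in> C")
    case True
    have "inj_on (inv_into C \<pi>) (\<pi> ` C)" by (simp add: inj_on_inv_into)
    moreover have "inv_into C \<pi> ` \<pi> ` C \<subseteq> I" using assms(3,4) by simp
    ultimately have "transport (\<pi> ` C) I (inv_into C \<pi>) y (inv_into C \<pi> (\<pi> s)) = y (\<pi> s)" for y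
      using True by (intro transport_at) auto
    then show ?thesis using True assms(4,5) by (simp add: transport_at)
  next
    case False
    moreover have "inv_into C \<pi> ` \<pi> ` C = C" using assms(4) by simp
    ultimately show ?thesis
      using assms(2,6) by (auto simp: transport_def mem_cyclic_product[OF assms(1)])
  qed
qed

lemma inj_on_transport:
  assumes "\<forall>i\<in>I. 0 < k i" "C \<subseteq> I" "inj_on \<pi> C" "\<pi> ` C \<subseteq> J"
  shows "inj_on (transport C J \<pi>) {x \<in> carrier (cyclic_product I k). \<forall>s\<in>I - C. x s = 0}"
  using transport_inv_into[OF assms(1) _ assms(2-4)]
  by (intro inj_on_inverseI[where g = "transport (\<pi> ` C) I (inv_into C \<pi>)"]) auto

lemma transport_extend:
  assumes "U \<subseteq> T" "inj_on \<pi>' T" "\<forall>s\<in>U. \<pi> s = \<pi>' s" "\<forall>s\<in>T - U. x s = 0"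
  shows "transport U J \<pi> x = transport T J \<pi>' x"
proof
  fix j
  have image_U: "\<pi> ` U = \<pi>' ` U" using assms(3) by (auto simp: image_def)
  have "inj_on \<pi> U" using inj_on_subset[OF assms(2,1)] assms(3) by (simp add: inj_on_def)
  show "transport U J \<pi> x j = transport T J \<pi>' x j"
  proof (cases "j \<in> \<pi>' ` T")
    case True
    then obtain s where s: "s \<in> T" "j = \<pi>' s" by blast
    show ?thesis
    proof (cases "s \<in> U")
      case True
      then have "j = \<pi> s" using s assms(3) by simp
      then have "inv_into U \<pi> j = s" "j \<in> \<pi> ` U"
        using True \<open>inj_on \<pi> U\<close> by auto
      moreover have "inv_into T \<pi>' j = s" using s assms(2) by simp
      ultimately show ?thesis using \<open>j \<in> \<pi>' ` T\<close> by (simp add: transport_def)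
    next
      case False
      then have "j \<notin> \<pi>' ` U" using s assms(1,2) by (auto dest: inj_onD)
      then show ?thesis using False s assms(2,4) image_U by (simp add: transport_def)
    qed
  next
    case False
    then show ?thesis using assms(1) image_U by (auto simp: transport_def)
  qed
qed

subsection \<open>Transvections\<close>

definition transvection ::
    "nat set \<Rightarrow> (nat \<Rightarrow> nat) \<Rightarrow> nat \<Rightarrow> (nat \<Rightarrow> int) \<Rightarrow> (nat \<Rightarrow> int) \<Rightarrow> nat \<Rightarrow> int" where
  "transvection I k t c x = (\<lambda>s\<in>I. if s = t then x t else (x s + c s * x t) mod int (k s))"

lemma transvection_in_carrier:
  assumes "\<forall>i\<in>I. 0 < k i" "x \<in> carrier (cyclic_product I k)" "t \<in> I"
  shows "transvection I k t c x \<in> carrier (cyclic_product I k)"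
  using assms by (auto simp: mem_cyclic_product transvection_def)

lemma transvection_inverse:
  assumes "\<forall>i\<in>I. 0 < k i" "x \<in> carrier (cyclic_product I k)" "t \<in> I"
  shows "transvection I k t (\<lambda>s. - c s) (transvection I k t c x) = x"
proof
  fix s
  show "transvection I k t (\<lambda>s. - c s) (transvection I k t c x) s = x s"
    using assms by (auto simp: transvection_def mem_cyclic_product mod_diff_left_eq)
qed

lemma transvection_hom:
  assumes "\<forall>i\<in>I. 0 < k i" "t \<in> I" "\<forall>s\<in>I - {t}. int (k s) dvd c s * int (k t)"
  shows "transvection I k t c \<in> hom (cyclic_product I k) (cyclic_product I k)"
proof (rule homI)
  fix x y
  show "transvection I k t c (x \<otimes>\<^bsub>cyclic_product I k\<^esub> y) =
          transvection I k t c x \<otimes>\<^bsub>cyclic_product I k\<^esub> transvection I k t c y"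
  proof
    fix s
    let ?xy = "x \<otimes>\<^bsub>cyclic_product I k\<^esub> y"
    show "transvection I k t c ?xy s =
            (transvection I k t c x \<otimes>\<^bsub>cyclic_product I k\<^esub> transvection I k t c y) s"
    proof (cases "s \<in> I - {t}")
      case True
      have dvd: "int (k s) dvd c s * int (k t)" using True assms(3) by blast
      have "transvection I k t c ?xy s = ((x s + y s) + c s * ((x t + y t) mod int (k t))) mod int (k s)"
        using True assms(2) by (simp add: transvection_def mult_cyclic_product mod_add_left_eq)
      also have "\<dots> = ((x s + y s) + c s * (x t + y t)) mod int (k s)"
        using mult_mod_eq_of_dvd[OF dvd] by (metis mod_add_right_eq)
      also have "\<dots> = ((x s + c s * x t) + (y s + c s * y t)) mod int (k s)"
        by (simp add: algebra_simps)
      also have "\<dots> = (transvection I k t c x \<otimes>\<^bsub>cyclic_product I k\<^esub> transvection I k t c y) s"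
        using True by (simp add: transvection_def mult_cyclic_product mod_add_eq)
      finally show ?thesis .
    qed (auto simp: transvection_def mult_cyclic_product)
  qed
qed (use assms transvection_in_carrier in blast)

lemma transvection_iso:
  assumes "\<forall>i\<in>I. 0 < k i" "t \<in> I" "\<forall>s\<in>I - {t}. int (k s) dvd c s * int (k t)"
  shows "transvection I k t c \<in> iso (cyclic_product I k) (cyclic_product I k)"
proof -
  have "transvection I k t (\<lambda>s. - c s) \<in> hom (cyclic_product I k) (cyclic_product I k)"
    using assms by (intro transvection_hom) auto
  then have "group_isomorphisms (cyclic_product I k) (cyclic_product I k)
               (transvection I k t c) (transvection I k t (\<lambda>s. - c s))"
    using assms transvection_hom transvection_inverse[OF assms(1) _ assms(2)]
      transvection_inverse[OF assms(1) _ assms(2), of _ "\<lambda>s. - c s"]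
    by (auto simp: group_isomorphisms_def)
  then show ?thesis by (rule group_isomorphisms_imp_iso)
qed

lemma transvection_transport:
  assumes "\<forall>i\<in>I. 0 < k i" "x \<in> carrier (cyclic_product I k)" "C \<subseteq> I" "t \<in> C"
    and "coordinate_embedding C k J k' \<pi>"
  shows "transvection J k' (\<pi> t) (transport C J \<pi> c) (transport C J \<pi> x) =
           transport C J \<pi> (transvection I k t c x)"
proof
  fix j
  show "transvection J k' (\<pi> t) (transport C J \<pi> c) (transport C J \<pi> x) j =
          transport C J \<pi> (transvection I k t c x) j"
  proof (cases "j \<in> J \<and> j \<in> \<pi> ` C")
    case True
    then obtain s where s: "s \<in> C" "j = \<pi> s" by blast
    have "\<pi> s = \<pi> t \<longleftrightarrow> s = t"
      using assms(4,5) s(1) by (auto simp: coordinate_embedding_def dest: inj_onD)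
    then show ?thesis
      using s True assms(3-5) by (auto simp: transvection_def transport_at coordinate_embedding_def)
  next
    case False
    moreover have "\<pi> t \<in> \<pi> ` C" using assms(4) by blast
    ultimately show ?thesis by (auto simp: transvection_def transport_def)
  qed
qed

lemma transvection_transport_iso:
  assumes "\<forall>j\<in>J. 0 < k' j" "C \<subseteq> I" "t \<in> C" "coordinate_embedding C k J k' \<pi>"
    and "\<forall>s\<in>I - {t}. int (k s) dvd c s * int (k t)"
  shows "transvection J k' (\<pi> t) (transport C J \<pi> c) \<in> iso (cyclic_product J k') (cyclic_product J k')"
proof (rule transvection_iso)
  show "\<pi> t \<in> J" using assms(3,4) by (auto simp: coordinate_embedding_def)
  show "\<forall>j\<in>J - {\<pi> t}. int (k' j) dvd transport C J \<pi> c j * int (k' (\<pi> t))"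
  proof
    fix j assume j: "j \<in> J - {\<pi> t}"
    show "int (k' j) dvd transport C J \<pi> c j * int (k' (\<pi> t))"
    proof (cases "j \<in> \<pi> ` C")
      case True
      then obtain s where "s \<in> C" "j = \<pi> s" by blast
      then show ?thesis using j assms by (auto simp: coordinate_embedding_def transport_at)
    qed (use j in \<open>simp add: transport_def\<close>)
  qed
qed (use assms(1) in blast)

inductive transvection_product ::
    "nat set \<Rightarrow> (nat \<Rightarrow> nat) \<Rightarrow> nat set \<Rightarrow> ((nat \<Rightarrow> int) \<Rightarrow> nat \<Rightarrow> int) \<Rightarrow> bool"
  for I k C where
  identity: "transvection_product I k C (\<lambda>x. x)"
| transvection: "transvection_product I k C \<theta> \<Longrightarrow> t \<in> C \<Longrightarrow> \<forall>s. s \<notin> C \<longrightarrow> c s = 0 \<Longrightarrow>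
    \<forall>s\<in>I - {t}. int (k s) dvd c s * int (k t) \<Longrightarrow>
    transvection_product I k C (transvection I k t c \<circ> \<theta>)"

lemma transvection_product_single:
  assumes "t \<in> C" "\<forall>s. s \<notin> C \<longrightarrow> c s = 0" "\<forall>s\<in>I - {t}. int (k s) dvd c s * int (k t)"
  shows "transvection_product I k C (transvection I k t c)"
  using transvection_product.transvection[OF transvection_product.identity assms] by (simp add: o_def)

lemma transvection_product_mono:
  assumes "transvection_product I k C \<theta>" "C \<subseteq> C'"
  shows "transvection_product I k C' \<theta>"
  using assms by induction (auto intro: transvection_product.intros)

lemma transvection_product_comp:
  assumes "transvection_product I k C \<theta>" "transvection_product I k C \<theta>'"
  shows "transvection_product I k C (\<theta> \<circ> \<theta>')"
  using assms
proof induction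
  case (transvection \<theta> t c)
  then show ?case by (metis comp_assoc transvection_product.transvection)
qed (simp add: o_def)

lemma transvection_product_iso:
  assumes "transvection_product I k C \<theta>" "\<forall>i\<in>I. 0 < k i" "C \<subseteq> I"
  shows "\<theta> \<in> iso (cyclic_product I k) (cyclic_product I k)"
  using assms
proof induction
  case identity
  show ?case by (rule iso_set_refl)
next
  case (transvection \<theta> t c)
  then show ?case using iso_set_trans transvection_iso by blast
qed

lemma transvection_product_fixes:
  assumes "transvection_product I k C \<theta>" "\<forall>i\<in>I. 0 < k i"
    and "x \<in> carrier (cyclic_product I k)" "\<forall>s\<in>C. x s = 0"
  shows "\<theta> x = x"
  using assms
proof induction
  case (transvection \<theta> t c)
  then show ?case by (auto simp: transvection_def mem_cyclic_product)
qed simp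

lemma transvection_product_apply_outside:
  assumes "transvection_product I k C \<theta>" "\<forall>i\<in>I. 0 < k i" "C \<subseteq> I"
    and "x \<in> carrier (cyclic_product I k)" "s \<notin> C"
  shows "\<theta> x s = x s"
  using assms
proof induction
  case (transvection \<theta> t c)
  have "\<theta> x \<in> carrier (cyclic_product I k)"
    using iso_in_carrier[OF transvection_product_iso[OF transvection.hyps(1)]] transvection.prems
    by blast
  then show ?case using transvection by (auto simp: transvection_def mem_cyclic_product)
qed simp

lemma transvection_product_transport:
  assumes "transvection_product I k C \<theta>" "\<forall>i\<in>I. 0 < k i" "\<forall>j\<in>J. 0 < k' j" "C \<subseteq> I"
    and "coordinate_embedding C k J k' \<pi>"
  shows "\<exists>\<theta>'. \<theta>' \<in> iso (cyclic_product J k') (cyclic_product J k') \<and>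
           (\<forall>x\<in>carrier (cyclic_product I k). \<theta>' (transport C J \<pi> x) = transport C J \<pi> (\<theta> x))"
  using assms
proof induction
  case identity
  show ?case by (intro exI[of _ "\<lambda>x. x"]) (simp add: iso_set_refl)
next
  case (transvection \<theta> t c)
  then obtain \<theta>' where \<theta>': "\<theta>' \<in> iso (cyclic_product J k') (cyclic_product J k')"
    "\<forall>x\<in>carrier (cyclic_product I k). \<theta>' (transport C J \<pi> x) = transport C J \<pi> (\<theta> x)"
    by blast
  let ?c' = "transport C J \<pi> c"
  have "transvection J k' (\<pi> t) ?c' \<in> iso (cyclic_product J k') (cyclic_product J k')"
    using transvection by (intro transvection_transport_iso) auto
  then have iso: "transvection J k' (\<pi> t) ?c' \<circ> \<theta>' \<in> iso (cyclic_product J k') (cyclic_product J k')"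
    using \<theta>'(1) by (rule iso_set_trans[rotated])
  show ?case
  proof (intro exI conjI ballI)
    fix x assume x: "x \<in> carrier (cyclic_product I k)"
    then have "\<theta> x \<in> carrier (cyclic_product I k)"
      using iso_in_carrier[OF transvection_product_iso[OF transvection.hyps(1)]] transvection.prems
      by blast
    then show "(transvection J k' (\<pi> t) ?c' \<circ> \<theta>') (transport C J \<pi> x) =
                 transport C J \<pi> ((transvection I k t c \<circ> \<theta>) x)"
      using x \<theta>'(2) transvection.hyps(2) transvection.prems by (simp add: transvection_transport)
  qed (rule iso)
qed

subsection \<open>Moving finitely many elements onto few coordinates\<close>

lemma clear_coordinates_odd_pivot:
  assumes orders: "k ` I \<subseteq> {2, 4}" and "C \<subseteq> I"
    and t: "t \<in> C" "odd (z t)" and even4: "\<forall>s\<in>C. k s = 4 \<longrightarrow> k t = 4 \<or> even (z s)"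
  shows "\<exists>\<theta>. transvection_product I k C \<theta> \<and> (\<forall>s\<in>C - {t}. \<theta> z s = 0)"
proof -
  define c where "c s = (if s \<in> C \<and> s \<noteq> t then - (z s * z t) else 0)" for s
  have k4: "int (k s) dvd 4" if "s \<in> I" for s using that orders by auto
  have "4 dvd 1 - z t * z t"
  proof -
    obtain m where "z t = 2 * m + 1" using t(2) by (auto elim: oddE)
    then have "1 - z t * z t = 4 * (- m * m - m)" by (simp add: algebra_simps)
    then show ?thesis by simp
  qed
  then have "int (k s) dvd z s * (1 - z t * z t)" if "s \<in> I" for s
    using dvd_trans[OF k4[OF that]] by simp
  then have "transvection I k t c z s = 0" if "s \<in> C - {t}" for s
    using that \<open>C \<subseteq> I\<close> by (auto simp: transvection_def c_def algebra_simps)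
  moreover have "int (k s) dvd c s * int (k t)" if "s \<in> I - {t}" for s
  proof (cases "s \<in> C")
    case True
    have "k t = 2 \<or> k t = 4" "k s = 2 \<or> k s = 4" using that t(1) \<open>C \<subseteq> I\<close> orders by auto
    then show ?thesis using True that even4 by (auto simp: c_def elim!: evenE)
  qed (simp add: c_def)
  ultimately show ?thesis
    using t(1) by (intro exI[of _ "transvection I k t c"] conjI transvection_product_single)
      (auto simp: c_def)
qed

lemma clear_coordinates_even_pivot:
  assumes orders: "k ` I \<subseteq> {2, 4}" and "C \<subseteq> I" and z: "z \<in> carrier (cyclic_product I k)"
    and t: "t \<in> C" "z t \<noteq> 0" and even: "\<forall>s\<in>C. even (z s)"
  shows "\<exists>\<theta>. transvection_product I k C \<theta> \<and> (\<forall>s\<in>C - {t}. \<theta> z s = 0)"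
proof -
  define c where "c s = (if s \<in> C \<and> s \<noteq> t then - (z s div 2) else 0)" for s
  have "t \<in> I" "\<forall>i\<in>I. 0 < k i" using t(1) \<open>C \<subseteq> I\<close> orders by auto
  then have "0 \<le> z t" "z t < int (k t)" "k t = 2 \<or> k t = 4"
    using z orders by (auto simp: mem_cyclic_product)
  then have "k t = 4" "z t = 2" using t even by (auto elim!: evenE)
  have "transvection I k t c z s = 0" if "s \<in> C - {t}" for s
    using that even \<open>C \<subseteq> I\<close> \<open>z t = 2\<close> by (auto simp: transvection_def c_def)
  moreover have "int (k s) dvd c s * int (k t)" if "s \<in> I" for s
  proof -
    have "int (k s) dvd 4" using that orders by auto
    then show ?thesis using \<open>k t = 4\<close> by (simp add: c_def)
  qed
  moreover have "\<forall>s. s \<notin> C \<longrightarrow> c s = 0" by (simp add: c_def)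
  ultimately show ?thesis
    using t(1) by (intro exI[of _ "transvection I k t c"] conjI transvection_product_single) auto
qed

lemma clear_coordinates_but_one:
  assumes orders: "k ` I \<subseteq> {2, 4}" and "C \<subseteq> I" and z: "z \<in> carrier (cyclic_product I k)"
  shows "\<exists>\<theta> t. transvection_product I k C \<theta> \<and> (\<forall>s\<in>C - {t}. \<theta> z s = 0)"
proof -
  consider (odd4) t where "t \<in> C" "k t = 4" "odd (z t)"
    | (odd2) t where "t \<in> C" "odd (z t)" "\<forall>s\<in>C. k s = 4 \<longrightarrow> even (z s)"
    | (even) "\<forall>s\<in>C. even (z s)"
    by blast
  then show ?thesis
  proof cases
    case odd4
    then have "\<forall>s\<in>C. k s = 4 \<longrightarrow> k t = 4 \<or> even (z s)" by blast
    then show ?thesis using clear_coordinates_odd_pivot[where z = z, OF orders \<open>C \<subseteq> I\<close> odd4(1,3)] by blast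
  next
    case odd2
    then have "\<forall>s\<in>C. k s = 4 \<longrightarrow> k t = 4 \<or> even (z s)" by blast
    then show ?thesis using clear_coordinates_odd_pivot[where z = z, OF orders \<open>C \<subseteq> I\<close> odd2(1,2)] by blast
  next
    case even
    show ?thesis
    proof (cases "\<exists>t\<in>C. z t \<noteq> 0")
      case True
      then obtain t where t: "t \<in> C" "z t \<noteq> 0" by blast
      then show ?thesis using clear_coordinates_even_pivot[OF assms t even] by blast
    next
      case False
      then show ?thesis using transvection_product.identity by blast
    qed
  qed
qed

lemma clear_coordinates_but_card:
  assumes orders: "k ` I \<subseteq> {2, 4}" and "C \<subseteq> I" and "finite P"
    and g: "\<forall>i\<in>P. g i \<in> carrier (cyclic_product I k)"
  shows "\<exists>\<theta> U. transvection_product I k C \<theta> \<and> U \<subseteq> C \<and> finite U \<and> card U \<le> card P \<and>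
           (\<forall>i\<in>P. \<forall>s\<in>C - U. \<theta> (g i) s = 0)"
  using \<open>finite P\<close> g
proof (induction P rule: finite_induct)
  case empty
  then show ?case by (intro exI[of _ "\<lambda>x. x"] exI[of _ "{}"]) (auto intro: transvection_product.identity)
next
  case (insert i P)
  then obtain \<theta>0 U0 where \<theta>0: "transvection_product I k C \<theta>0" "U0 \<subseteq> C" "finite U0"
      "card U0 \<le> card P" "\<forall>j\<in>P. \<forall>s\<in>C - U0. \<theta>0 (g j) s = 0"
    by auto
  have pos: "\<forall>i\<in>I. 0 < k i" using orders by auto
  have in_carrier: "\<theta>0 (g j) \<in> carrier (cyclic_product I k)" if "j \<in> insert i P" for j
    using that insert.prems iso_in_carrier[OF transvection_product_iso[OF \<theta>0(1) pos \<open>C \<subseteq> I\<close>]]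
    by blast
  obtain \<theta>1 t where \<theta>1: "transvection_product I k (C - U0) \<theta>1"
      "\<forall>s\<in>C - U0 - {t}. \<theta>1 (\<theta>0 (g i)) s = 0"
    using clear_coordinates_but_one[OF orders _ in_carrier[of i]] \<open>C \<subseteq> I\<close> by blast
  \<comment> \<open>\<theta>1 acts only on C - U0, where the images of the earlier elements already vanish\<close>
  have "\<theta>1 (\<theta>0 (g j)) = \<theta>0 (g j)" if "j \<in> P" for j
    using transvection_product_fixes[OF \<theta>1(1) pos] in_carrier that \<theta>0(5) by blast
  then have "\<forall>j\<in>insert i P. \<forall>s\<in>C - (U0 \<union> ({t} \<inter> C)). (\<theta>1 \<circ> \<theta>0) (g j) s = 0"
    using \<theta>0(5) \<theta>1(2) by auto
  moreover have "card (U0 \<union> ({t} \<inter> C)) \<le> card (insert i P)"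
    using card_Un_le[of U0 "{t} \<inter> C"] \<theta>0(4) insert.hyps
    by (cases "t \<in> C") auto
  moreover have "transvection_product I k C (\<theta>1 \<circ> \<theta>0)"
    using transvection_product_comp[OF transvection_product_mono[OF \<theta>1(1)] \<theta>0(1)] by blast
  moreover have "U0 \<union> ({t} \<inter> C) \<subseteq> C" "finite (U0 \<union> ({t} \<inter> C))" using \<theta>0 by auto
  ultimately show ?case by blast
qed

subsection \<open>Aligned tuples\<close>

definition aligned_via ::
    "nat set \<Rightarrow> (nat \<Rightarrow> nat) \<Rightarrow> nat set \<Rightarrow> (nat \<Rightarrow> nat) \<Rightarrow> ((nat \<Rightarrow> int) \<Rightarrow> nat \<Rightarrow> int)
      \<Rightarrow> ((nat \<Rightarrow> int) \<Rightarrow> nat \<Rightarrow> int) \<Rightarrow> nat set \<Rightarrow> (nat \<Rightarrow> nat) \<Rightarrow> nat set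
      \<Rightarrow> (nat \<Rightarrow> nat \<Rightarrow> int) \<Rightarrow> (nat \<Rightarrow> nat \<Rightarrow> int) \<Rightarrow> bool" where
  "aligned_via IG kG IH kH \<sigma> \<tau> T \<pi> P g h \<longleftrightarrow>
     \<sigma> \<in> iso (cyclic_product IG kG) (cyclic_product IG kG) \<and>
     \<tau> \<in> iso (cyclic_product IH kH) (cyclic_product IH kH) \<and>
     T \<subseteq> IG \<and> coordinate_embedding T kG IH kH \<pi> \<and>
     (\<forall>i\<in>P. g i \<in> carrier (cyclic_product IG kG) \<and> h i \<in> carrier (cyclic_product IH kH) \<and>
        (\<forall>s\<in>IG - T. \<sigma> (g i) s = 0) \<and> \<tau> (h i) = transport T IH \<pi> (\<sigma> (g i)))"

definition aligned ::
    "nat set \<Rightarrow> (nat \<Rightarrow> nat) \<Rightarrow> nat set \<Rightarrow> (nat \<Rightarrow> nat) \<Rightarrow> nat set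
      \<Rightarrow> (nat \<Rightarrow> nat \<Rightarrow> int) \<Rightarrow> (nat \<Rightarrow> nat \<Rightarrow> int) \<Rightarrow> bool" where
  "aligned IG kG IH kH P g h \<longleftrightarrow> (\<exists>\<sigma> \<tau> T \<pi>. aligned_via IG kG IH kH \<sigma> \<tau> T \<pi> P g h)"

lemma aligned_subset:
  assumes "aligned IG kG IH kH P g h" "P' \<subseteq> P" "\<forall>i\<in>P'. g' i = g i \<and> h' i = h i"
  shows "aligned IG kG IH kH P' g' h'"
proof -
  obtain \<sigma> \<tau> T \<pi> where al: "aligned_via IG kG IH kH \<sigma> \<tau> T \<pi> P g h"
    using assms(1) by (auto simp: aligned_def)
  have "g' i \<in> carrier (cyclic_product IG kG) \<and> h' i \<in> carrier (cyclic_product IH kH) \<and>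
          (\<forall>s\<in>IG - T. \<sigma> (g' i) s = 0) \<and> \<tau> (h' i) = transport T IH \<pi> (\<sigma> (g' i))"
    if "i \<in> P'" for i
  proof -
    have "i \<in> P" "g' i = g i" "h' i = h i" using that assms(2,3) by auto
    then show ?thesis using al by (simp add: aligned_via_def)
  qed
  then have "aligned_via IG kG IH kH \<sigma> \<tau> T \<pi> P' g' h'" using al by (simp add: aligned_via_def)
  then show ?thesis by (auto simp: aligned_def)
qed

lemma aligned_sym:
  assumes "\<forall>i\<in>IG. 0 < kG i" "aligned IG kG IH kH P g h"
  shows "aligned IH kH IG kG P h g"
proof -
  obtain \<sigma> \<tau> T \<pi> where al: "aligned_via IG kG IH kH \<sigma> \<tau> T \<pi> P g h"
    using assms(2) by (auto simp: aligned_def)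
  then have emb: "inj_on \<pi> T" "\<pi> ` T \<subseteq> IH" "\<forall>s\<in>T. kH (\<pi> s) = kG s" "T \<subseteq> IG"
    by (auto simp: aligned_via_def coordinate_embedding_def)
  have "coordinate_embedding (\<pi> ` T) kH IG kG (inv_into T \<pi>)"
    using emb by (auto simp: coordinate_embedding_def inj_on_inv_into)
  moreover have "\<sigma> (g i) = transport (\<pi> ` T) IG (inv_into T \<pi>) (\<tau> (h i))" if "i \<in> P" for i
  proof -
    have "\<sigma> (g i) \<in> carrier (cyclic_product IG kG)"
      using al that by (auto simp: aligned_via_def elim: iso_in_carrier)
    then show ?thesis
      using al that emb transport_inv_into[OF assms(1)] by (auto simp: aligned_via_def)
  qed
  moreover have "\<tau> (h i) j = 0" if "i \<in> P" "j \<in> IH - \<pi> ` T" for i j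
    using al that by (auto simp: aligned_via_def transport_def)
  ultimately have "aligned_via IH kH IG kG \<tau> \<sigma> (\<pi> ` T) (inv_into T \<pi>) P h g"
    using al emb by (auto simp: aligned_via_def)
  then show ?thesis by (auto simp: aligned_def)
qed

lemma aligned_via_inj_on_generate:
  assumes posG: "\<forall>i\<in>IG. 0 < kG i" and al: "aligned_via IG kG IH kH \<sigma> \<tau> T \<pi> P g h"
  shows "inj_on (transport T IH \<pi> \<circ> \<sigma>) (generate (cyclic_product IG kG) (g ` P))"
proof -
  let ?G = "cyclic_product IG kG"
  have \<sigma>: "\<sigma> \<in> iso ?G ?G" and "T \<subseteq> IG" and emb: "coordinate_embedding T kG IH kH \<pi>"
    using al by (auto simp: aligned_via_def)
  define M where "M = {x \<in> carrier ?G. \<forall>s\<in>IG - T. \<sigma> x s = 0}"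
  have "g ` P \<subseteq> M" using al by (auto simp: aligned_via_def M_def)
  then have "generate ?G (g ` P) \<subseteq> M"
    using group.generate_subgroup_incl[OF group_cyclic_product]
      subgroup_vanishing_preimage[OF posG iso_imp_homomorphism[OF \<sigma>]]
    unfolding M_def by blast
  moreover have "inj_on (transport T IH \<pi> \<circ> \<sigma>) M"
  proof (rule comp_inj_on)
    show "inj_on \<sigma> M" using \<sigma> by (auto simp: M_def iso_def bij_betw_def intro: inj_on_subset)
    have "\<sigma> ` M \<subseteq> {x \<in> carrier ?G. \<forall>s\<in>IG - T. x s = 0}"
      using iso_in_carrier[OF \<sigma>] by (auto simp: M_def)
    moreover have "inj_on (transport T IH \<pi>) {x \<in> carrier ?G. \<forall>s\<in>IG - T. x s = 0}"
      using inj_on_transport[OF posG \<open>T \<subseteq> IG\<close>] emb by (auto simp: coordinate_embedding_def)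
    ultimately show "inj_on (transport T IH \<pi>) (\<sigma> ` M)" by (rule inj_on_subset[rotated])
  qed
  ultimately show ?thesis by (rule inj_on_subset[rotated])
qed

lemma aligned_via_iso_subgroup_generated:
  assumes posG: "\<forall>i\<in>IG. 0 < kG i" and posH: "\<forall>j\<in>IH. 0 < kH j"
    and al: "aligned_via IG kG IH kH \<sigma> \<tau> T \<pi> P g h"
  shows "\<exists>\<phi>. \<phi> \<in> iso (subgroup_generated (cyclic_product IG kG) (g ` P))
                     (subgroup_generated (cyclic_product IH kH) (h ` P)) \<and>
             (\<forall>i\<in>P. \<phi> (g i) = h i)"
proof -
  let ?G = "cyclic_product IG kG" and ?H = "cyclic_product IH kH"
  let ?tr = "transport T IH \<pi>"
  have \<sigma>: "\<sigma> \<in> iso ?G ?G" and \<tau>: "\<tau> \<in> iso ?H ?H" and "T \<subseteq> IG"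
    and emb: "coordinate_embedding T kG IH kH \<pi>" and g: "g ` P \<subseteq> carrier ?G"
    using al by (auto simp: aligned_via_def)
  define \<tau>' where "\<tau>' = inv_into (carrier ?H) \<tau>"
  have \<tau>': "\<tau>' \<in> iso ?H ?H" unfolding \<tau>'_def using group.iso_set_sym[OF group_cyclic_product \<tau>] .
  have tr_\<sigma>: "?tr \<circ> \<sigma> \<in> hom ?G ?H"
    using \<sigma> transport_hom[OF posG posH \<open>T \<subseteq> IG\<close> emb] by (auto simp: iso_def intro: hom_compose)
  define \<Phi> where "\<Phi> = \<tau>' \<circ> (?tr \<circ> \<sigma>)"
  have "group_hom ?G ?H \<Phi>"
    unfolding \<Phi>_def using tr_\<sigma> \<tau>'
    by (auto simp: group_hom_def group_hom_axioms_def group_cyclic_product iso_def intro: hom_compose)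
  moreover have "inj_on \<Phi> (generate ?G (g ` P))"
    unfolding \<Phi>_def
  proof (rule comp_inj_on)
    show "inj_on (?tr \<circ> \<sigma>) (generate ?G (g ` P))" using aligned_via_inj_on_generate[OF posG al] .
    have "(?tr \<circ> \<sigma>) ` generate ?G (g ` P) \<subseteq> carrier ?H"
      using hom_in_carrier[OF tr_\<sigma>] group.generate_incl[OF group_cyclic_product g] by blast
    then show "inj_on \<tau>' ((?tr \<circ> \<sigma>) ` generate ?G (g ` P))"
      using \<tau>' by (auto simp: iso_def bij_betw_def intro: inj_on_subset)
  qed
  ultimately have "\<Phi> \<in> iso (subgroup_generated ?G (g ` P)) (subgroup_generated ?H (\<Phi> ` g ` P))"
    using iso_subgroup_generated_of_inj_on g by blast
  moreover have "\<Phi> (g i) = h i" if "i \<in> P" for i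
  proof -
    have "h i \<in> carrier ?H" "?tr (\<sigma> (g i)) = \<tau> (h i)" using al that by (auto simp: aligned_via_def)
    then show ?thesis using \<tau> by (simp add: \<Phi>_def \<tau>'_def iso_def bij_betw_def)
  qed
  ultimately show ?thesis by (intro exI[of _ \<Phi>]) (auto simp: image_image cong: image_cong)
qed

lemma aligned_via_shrink:
  assumes orders: "kG ` IG \<subseteq> {2, 4}" and posH: "\<forall>j\<in>IH. 0 < kH j"
    and al: "aligned_via IG kG IH kH \<sigma> \<tau> T \<pi> P g h" and "finite P"
  shows "\<exists>\<sigma>' \<tau>' U. finite U \<and> card U \<le> card P \<and> aligned_via IG kG IH kH \<sigma>' \<tau>' U \<pi> P g h"
proof -
  let ?G = "cyclic_product IG kG" and ?H = "cyclic_product IH kH"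
  have posG: "\<forall>i\<in>IG. 0 < kG i" using orders by auto
  have \<sigma>: "\<sigma> \<in> iso ?G ?G" and \<tau>: "\<tau> \<in> iso ?H ?H" and "T \<subseteq> IG"
    and emb: "coordinate_embedding T kG IH kH \<pi>"
    using al by (auto simp: aligned_via_def)
  have \<sigma>g: "\<sigma> (g i) \<in> carrier ?G" if "i \<in> P" for i
    using al that iso_in_carrier[OF \<sigma>] by (auto simp: aligned_via_def)
  obtain \<theta> U where \<theta>: "transvection_product IG kG T \<theta>" "U \<subseteq> T" "finite U" "card U \<le> card P"
      "\<forall>i\<in>P. \<forall>s\<in>T - U. \<theta> (\<sigma> (g i)) s = 0"
    using clear_coordinates_but_card[OF orders \<open>T \<subseteq> IG\<close> \<open>finite P\<close>, of "\<lambda>i. \<sigma> (g i)"] \<sigma>g by blast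
  obtain \<theta>' where \<theta>': "\<theta>' \<in> iso ?H ?H"
      "\<forall>x\<in>carrier ?G. \<theta>' (transport T IH \<pi> x) = transport T IH \<pi> (\<theta> x)"
    using transvection_product_transport[OF \<theta>(1) posG posH \<open>T \<subseteq> IG\<close> emb] by blast
  have \<theta>_iso: "\<theta> \<in> iso ?G ?G" using transvection_product_iso[OF \<theta>(1) posG \<open>T \<subseteq> IG\<close>] .
  have vanish: "\<forall>s\<in>IG - U. \<theta> (\<sigma> (g i)) s = 0" if "i \<in> P" for i
  proof
    fix s assume "s \<in> IG - U"
    then show "\<theta> (\<sigma> (g i)) s = 0"
      using that \<theta>(5) al \<sigma>g transvection_product_apply_outside[OF \<theta>(1) posG \<open>T \<subseteq> IG\<close>]
      by (cases "s \<in> T") (auto simp: aligned_via_def)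
  qed
  have "\<theta>' (\<tau> (h i)) = transport U IH \<pi> (\<theta> (\<sigma> (g i)))" if "i \<in> P" for i
  proof -
    have "\<theta>' (\<tau> (h i)) = transport T IH \<pi> (\<theta> (\<sigma> (g i)))"
      using al that \<theta>'(2) \<sigma>g by (auto simp: aligned_via_def)
    also have "\<dots> = transport U IH \<pi> (\<theta> (\<sigma> (g i)))"
      using emb \<theta>(2) vanish[OF that] \<open>T \<subseteq> IG\<close>
      by (intro transport_extend[symmetric]) (auto simp: coordinate_embedding_def)
    finally show ?thesis .
  qed
  moreover have "coordinate_embedding U kG IH kH \<pi>" using coordinate_embedding_subset[OF emb \<theta>(2)] .
  ultimately have "aligned_via IG kG IH kH (\<theta> \<circ> \<sigma>) (\<theta>' \<circ> \<tau>) U \<pi> P g h"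
    using al \<theta> \<theta>'(1) \<sigma> \<tau> \<theta>_iso vanish \<open>T \<subseteq> IG\<close>
    by (auto simp: aligned_via_def intro: iso_set_trans)
  then show ?thesis using \<theta> by blast
qed

lemma aligned_via_Un_override:
  assumes "aligned_via IG kG IH kH \<sigma> \<tau> T \<pi> P g h" "aligned_via IG kG IH kH \<sigma> \<tau> T \<pi> D z w"
  shows "aligned_via IG kG IH kH \<sigma> \<tau> T \<pi> (P \<union> D) (override_on g z D) (override_on h w D)"
  using assms by (auto simp: aligned_via_def override_on_def)

lemma aligned_via_enlarge:
  assumes posG: "\<forall>i\<in>IG. 0 < kG i" and al: "aligned_via IG kG IH kH \<sigma> \<tau> T \<pi> P g h"
    and \<theta>: "transvection_product IG kG (IG - T) \<theta>" and "T \<subseteq> T'" "T' \<subseteq> IG"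
    and \<pi>': "\<forall>s\<in>T. \<pi>' s = \<pi> s" "coordinate_embedding T' kG IH kH \<pi>'"
  shows "aligned_via IG kG IH kH (\<theta> \<circ> \<sigma>) \<tau> T' \<pi>' P g h"
proof -
  have \<sigma>: "\<sigma> \<in> iso (cyclic_product IG kG) (cyclic_product IG kG)"
    using al by (simp add: aligned_via_def)
  have "\<theta> \<in> iso (cyclic_product IG kG) (cyclic_product IG kG)"
    using transvection_product_iso[OF \<theta> posG] by blast
  moreover have "\<theta> (\<sigma> (g i)) = \<sigma> (g i)" "\<forall>s\<in>IG - T'. \<sigma> (g i) s = 0"
    "\<tau> (h i) = transport T' IH \<pi>' (\<sigma> (g i))" if "i \<in> P" for i
  proof -
    have "g i \<in> carrier (cyclic_product IG kG)" "\<forall>s\<in>IG - T. \<sigma> (g i) s = 0"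
      "\<tau> (h i) = transport T IH \<pi> (\<sigma> (g i))"
      using al that by (auto simp: aligned_via_def)
    moreover have "\<forall>s\<in>T' - T. \<sigma> (g i) s = 0" using calculation(2) \<open>T' \<subseteq> IG\<close> by blast
    ultimately show "\<theta> (\<sigma> (g i)) = \<sigma> (g i)" "\<forall>s\<in>IG - T'. \<sigma> (g i) s = 0"
      "\<tau> (h i) = transport T' IH \<pi>' (\<sigma> (g i))"
      using transvection_product_fixes[OF \<theta> posG] iso_in_carrier[OF \<sigma>] \<pi>' \<open>T \<subseteq> T'\<close>
        transport_extend[of T T' \<pi>' \<pi> "\<sigma> (g i)" IH]
      by (auto simp: coordinate_embedding_def)
  qed
  ultimately show ?thesis
    using al \<sigma> \<open>T' \<subseteq> IG\<close> \<pi>'(2) by (auto simp: aligned_via_def intro: iso_set_trans)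
qed

lemma aligned_via_extend:
  assumes orders: "kG ` IG \<subseteq> {2, 4}" and posH: "\<forall>j\<in>IH. 0 < kH j"
    and al: "aligned_via IG kG IH kH \<sigma> \<tau> T \<pi> P g h" and "finite T" "finite D"
    and "card T + card D \<le> m" and room: "\<forall>s\<in>IG. m \<le> card {j\<in>IH. kH j = kG s}"
    and z: "\<forall>i\<in>D. z i \<in> carrier (cyclic_product IG kG)"
  shows "\<exists>w. (\<forall>i\<in>D. w i \<in> carrier (cyclic_product IH kH)) \<and>
           aligned IG kG IH kH (P \<union> D) (override_on g z D) (override_on h w D)"
proof -
  let ?G = "cyclic_product IG kG" and ?H = "cyclic_product IH kH"
  have posG: "\<forall>i\<in>IG. 0 < kG i" using orders by auto
  have \<sigma>: "\<sigma> \<in> iso ?G ?G" and \<tau>: "\<tau> \<in> iso ?H ?H" and "T \<subseteq> IG"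
    and emb: "coordinate_embedding T kG IH kH \<pi>"
    using al by (auto simp: aligned_via_def)
  obtain \<theta> U where \<theta>: "transvection_product IG kG (IG - T) \<theta>" "U \<subseteq> IG - T" "finite U"
      "card U \<le> card D" "\<forall>i\<in>D. \<forall>s\<in>IG - T - U. \<theta> (\<sigma> (z i)) s = 0"
    using clear_coordinates_but_card[OF orders _ \<open>finite D\<close>, of "IG - T" "\<lambda>i. \<sigma> (z i)"] z
      iso_in_carrier[OF \<sigma>] by blast
  have "card (T \<union> U) \<le> m" using card_Un_le[of T U] \<theta>(4) \<open>card T + card D \<le> m\<close> by linarith
  then obtain \<pi>' where \<pi>': "\<forall>s\<in>T. \<pi>' s = \<pi> s" "coordinate_embedding (T \<union> U) kG IH kH \<pi>'"
    using coordinate_embedding_extend[OF \<open>finite T\<close> \<theta>(3) emb] room \<theta>(2) by blast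
  have "T \<union> U \<subseteq> IG" using \<open>T \<subseteq> IG\<close> \<theta>(2) by blast
  have old: "aligned_via IG kG IH kH (\<theta> \<circ> \<sigma>) \<tau> (T \<union> U) \<pi>' P g h"
    using aligned_via_enlarge[OF posG al \<theta>(1) _ \<open>T \<union> U \<subseteq> IG\<close> \<pi>'] by blast
  let ?tr = "transport (T \<union> U) IH \<pi>'"
  define w where "w i = inv_into (carrier ?H) \<tau> (?tr (\<theta> (\<sigma> (z i))))" for i
  have "?tr (\<theta> (\<sigma> (z i))) \<in> carrier ?H" if "i \<in> D" for i
    using that z iso_in_carrier[OF \<sigma>] iso_in_carrier[OF transvection_product_iso[OF \<theta>(1) posG]]
      hom_in_carrier[OF transport_hom[OF posG posH \<open>T \<union> U \<subseteq> IG\<close> \<pi>'(2)]]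
    by blast
  then have w: "w i \<in> carrier ?H" "\<tau> (w i) = ?tr (\<theta> (\<sigma> (z i)))" if "i \<in> D" for i
    using that \<tau> by (auto simp: w_def iso_def bij_betw_def inv_into_into f_inv_into_f)
  have "aligned_via IG kG IH kH (\<theta> \<circ> \<sigma>) \<tau> (T \<union> U) \<pi>' D z w"
    using old z w \<theta>(5) by (auto simp: aligned_via_def)
  from aligned_via_Un_override[OF old this] show ?thesis
    using w(1) unfolding aligned_def by blast
qed

lemma card_Diff_add_card_le:
  assumes "A \<subseteq> {..<m}" "B \<subseteq> {..<m}"
  shows "card (A - B) + card B \<le> m"
proof -
  have "finite (A - B)" "finite B" "(A - B) \<inter> B = {}" using assms by (auto intro: finite_subset)
  then have "card (A - B) + card B = card (A - B \<union> B)" by (rule card_Un_disjoint[symmetric])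
  also have "\<dots> \<le> card {..<m}" using assms by (intro card_mono) auto
  finally show ?thesis by simp
qed

lemma aligned_extend:
  assumes orders: "kG ` IG \<subseteq> {2, 4}" and posH: "\<forall>j\<in>IH. 0 < kH j"
    and "aligned IG kG IH kH (P - D) g h" "P \<subseteq> {..<m}" "D \<subseteq> {..<m}"
    and room: "\<forall>s\<in>IG. m \<le> card {j\<in>IH. kH j = kG s}"
    and z: "\<forall>i\<in>D. z i \<in> carrier (cyclic_product IG kG)"
  shows "\<exists>w. (\<forall>i\<in>D. w i \<in> carrier (cyclic_product IH kH)) \<and>
           aligned IG kG IH kH (P \<union> D) (override_on g z D) (override_on h w D)"
proof -
  have "finite (P - D)" "finite D" using assms(4,5) by (auto intro: finite_subset)
  obtain \<sigma> \<tau> T \<pi> where "aligned_via IG kG IH kH \<sigma> \<tau> T \<pi> (P - D) g h"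
    using assms(3) by (auto simp: aligned_def)
  from aligned_via_shrink[OF orders posH this \<open>finite (P - D)\<close>]
  obtain \<sigma>' \<tau>' U where U: "finite U" "card U \<le> card (P - D)"
      and al: "aligned_via IG kG IH kH \<sigma>' \<tau>' U \<pi> (P - D) g h"
    by blast
  have "card U + card D \<le> m" using U(2) card_Diff_add_card_le[OF assms(4,5)] by linarith
  from aligned_via_extend[OF orders posH al U(1) \<open>finite D\<close> this room z]
  show ?thesis by (simp add: Un_Diff_cancel2)
qed

lemma aligned_iso_subgroup_generated:
  assumes "\<forall>i\<in>IG. 0 < kG i" "\<forall>j\<in>IH. 0 < kH j" "aligned IG kG IH kH P g h"
  shows "\<exists>\<phi>. \<phi> \<in> iso (subgroup_generated (cyclic_product IG kG) (g ` P))
                     (subgroup_generated (cyclic_product IH kH) (h ` P)) \<and>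
             (\<forall>i\<in>P. \<phi> (g i) = h i)"
  using assms aligned_via_iso_subgroup_generated by (auto simp: aligned_def)

subsection \<open>The pebble game\<close>

definition aligned_positions ::
    "nat set \<Rightarrow> (nat \<Rightarrow> nat) \<Rightarrow> nat set \<Rightarrow> (nat \<Rightarrow> nat) \<Rightarrow> nat
      \<Rightarrow> (nat \<Rightarrow> int, nat \<Rightarrow> int) pebble_pos set" where
  "aligned_positions IG kG IH kH m =
     {p. {i. p i \<noteq> None} \<subseteq> {..<m} \<and>
         aligned IG kG IH kH {i. p i \<noteq> None} (\<lambda>i. fst (the (p i))) (\<lambda>i. snd (the (p i)))}"

lemma empty_in_aligned_positions: "(\<lambda>_. None) \<in> aligned_positions IG kG IH kH m"
proof -
  have "aligned IG kG IH kH {} g h" for g h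
    unfolding aligned_def aligned_via_def coordinate_embedding_def using iso_set_refl by blast
  then show ?thesis by (simp add: aligned_positions_def)
qed

lemma pick_up_in_aligned_positions:
  assumes "p \<in> aligned_positions IG kG IH kH m"
  shows "pick_up p D \<in> aligned_positions IG kG IH kH m"
proof -
  have dom: "{i. pick_up p D i \<noteq> None} \<subseteq> {i. p i \<noteq> None}" by (auto simp: pick_up_def)
  have "aligned IG kG IH kH {i. pick_up p D i \<noteq> None}
          (\<lambda>i. fst (the (pick_up p D i))) (\<lambda>i. snd (the (pick_up p D i)))"
    using assms unfolding aligned_positions_def
    by (elim CollectE conjE aligned_subset[OF _ dom]) (auto simp: pick_up_def)
  then show ?thesis using assms dom unfolding aligned_positions_def by blast
qed

lemma place_in_aligned_positions:
  assumes "{i. p i \<noteq> None} \<subseteq> {..<m}" "D \<subseteq> {..<m}"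
    and "aligned IG kG IH kH ({i. p i \<noteq> None} \<union> D)
           (override_on (\<lambda>i. fst (the (p i))) a D) (override_on (\<lambda>i. snd (the (p i))) b D)"
  shows "place p D a b \<in> aligned_positions IG kG IH kH m"
proof -
  have "{i. place p D a b i \<noteq> None} = {i. p i \<noteq> None} \<union> D" by (auto simp: place_def)
  moreover have "(\<lambda>i. fst (the (place p D a b i))) = override_on (\<lambda>i. fst (the (p i))) a D"
    "(\<lambda>i. snd (the (place p D a b i))) = override_on (\<lambda>i. snd (the (p i))) b D"
    by (auto simp: place_def override_on_def)
  ultimately show ?thesis using assms by (simp add: aligned_positions_def)
qed

lemma aligned_positions_partial_iso:
  assumes "\<forall>i\<in>IG. 0 < kG i" "\<forall>j\<in>IH. 0 < kH j" "p \<in> aligned_positions IG kG IH kH m"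
  shows "pebble_partial_iso (cyclic_product IG kG) (cyclic_product IH kH) p"
proof -
  have "aligned IG kG IH kH {i. p i \<noteq> None} (\<lambda>i. fst (the (p i))) (\<lambda>i. snd (the (p i)))"
    using assms(3) by (simp add: aligned_positions_def)
  from aligned_iso_subgroup_generated[OF assms(1,2) this] show ?thesis
    unfolding pebble_partial_iso_def Let_def .
qed

lemma dup_invariant_aligned_positions:
  assumes ordersG: "kG ` IG \<subseteq> {2, 4}" and ordersH: "kH ` IH \<subseteq> {2, 4}"
    and roomGH: "\<forall>s\<in>IG. m \<le> card {j\<in>IH. kH j = kG s}"
    and roomHG: "\<forall>s\<in>IH. m \<le> card {j\<in>IG. kG j = kH s}"
  shows "dup_invariant q m (cyclic_product IG kG) (cyclic_product IH kH) (aligned_positions IG kG IH kH m)"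
  unfolding dup_invariant_def
proof (intro ballI allI impI conjI)
  let ?G = "cyclic_product IG kG" and ?H = "cyclic_product IH kH"
  have posG: "\<forall>i\<in>IG. 0 < kG i" and posH: "\<forall>j\<in>IH. 0 < kH j" using ordersG ordersH by auto
  fix p D
  assume p: "p \<in> aligned_positions IG kG IH kH m" and D: "D \<subseteq> {..<m} \<and> 1 \<le> card D \<and> card D \<le> q"
  then show "pebble_partial_iso ?G ?H (pick_up p D)"
    using aligned_positions_partial_iso[OF posG posH] pick_up_in_aligned_positions by blast
  define P where "P = {i. p i \<noteq> None}"
  define g where "g i = fst (the (p i))" for i
  define h where "h i = snd (the (p i))" for i
  have "P \<subseteq> {..<m}" "aligned IG kG IH kH (P - D) g h"
    using p by (auto simp: aligned_positions_def P_def g_def h_def elim: aligned_subset)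
  moreover have "D \<subseteq> {..<m}" using D by blast
  ultimately have place: "place p D a b \<in> aligned_positions IG kG IH kH m"
    if "aligned IG kG IH kH (P \<union> D) (override_on g a D) (override_on h b D)" for a b
    using that place_in_aligned_positions[of p m D] unfolding P_def g_def h_def by blast
  show "\<exists>b. (\<forall>i\<in>D. b i \<in> carrier ?H) \<and> place p D a b \<in> aligned_positions IG kG IH kH m"
    if "\<forall>i\<in>D. a i \<in> carrier ?G" for a
    using aligned_extend[OF ordersG posH \<open>aligned IG kG IH kH (P - D) g h\<close> \<open>P \<subseteq> {..<m}\<close>
        \<open>D \<subseteq> {..<m}\<close> roomGH that] place by blast
  show "\<exists>a. (\<forall>i\<in>D. a i \<in> carrier ?G) \<and> place p D a b \<in> aligned_positions IG kG IH kH m"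
    if "\<forall>i\<in>D. b i \<in> carrier ?H" for b
    using aligned_extend[OF ordersH posG aligned_sym[OF posG \<open>aligned IG kG IH kH (P - D) g h\<close>]
        \<open>P \<subseteq> {..<m}\<close> \<open>D \<subseteq> {..<m}\<close> roomHG that] aligned_sym[OF posH] place by blast
qed

lemma duplicator_wins_cyclic_products:
  assumes "kG ` IG \<subseteq> {2, 4}" "kH ` IH \<subseteq> {2, 4}"
    and "card (carrier (cyclic_product IG kG)) = card (carrier (cyclic_product IH kH))"
    and "\<forall>s\<in>IG. m \<le> card {j\<in>IH. kH j = kG s}" "\<forall>s\<in>IH. m \<le> card {j\<in>IG. kG j = kH s}"
  shows "duplicator_wins q m (cyclic_product IG kG) (cyclic_product IH kH)"
  unfolding duplicator_wins_def using assms(3)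
  by (intro conjI exI[of _ "aligned_positions IG kG IH kH m"] empty_in_aligned_positions
      dup_invariant_aligned_positions[OF assms(1,2,4,5)])

subsection \<open>Products of copies of Z/2 and Z/4\<close>

definition Z2Z4_orders :: "nat \<Rightarrow> nat \<Rightarrow> nat" where
  "Z2Z4_orders a i = (if i < a then 2 else 4)"

lemma Z2Z4_group_eq_cyclic_product: "Z2Z4_group a b = cyclic_product {..<a + b} (Z2Z4_orders a)"
  by (simp add: Z2Z4_group_def cyclic_product_def Z2Z4_orders_def)

lemma Z2Z4_orders_range: "Z2Z4_orders a ` I \<subseteq> {2, 4}"
  by (auto simp: Z2Z4_orders_def)

lemma card_carrier_Z2Z4_group: "card (carrier (Z2Z4_group a b)) = 2 ^ a * 4 ^ b"
proof -
  have "{..<a} \<union> {a..<a + b} = {..<a + b}" by auto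
  moreover have "prod (Z2Z4_orders a) ({..<a} \<union> {a..<a + b}) =
                   prod (Z2Z4_orders a) {..<a} * prod (Z2Z4_orders a) {a..<a + b}"
    by (rule prod.union_disjoint) auto
  ultimately have "(\<Prod>i<a + b. Z2Z4_orders a i) = (\<Prod>i<a. Z2Z4_orders a i) * (\<Prod>i\<in>{a..<a + b}. Z2Z4_orders a i)"
    by simp
  also have "\<dots> = 2 ^ a * 4 ^ b" by (simp add: Z2Z4_orders_def)
  finally show ?thesis
    by (simp add: Z2Z4_group_eq_cyclic_product card_carrier_cyclic_product Z2Z4_orders_def)
qed

lemma le_card_Z2Z4_orders:
  assumes "m \<le> a" "m \<le> b"
  shows "\<forall>s\<in>{..<a' + b'}. m \<le> card {j\<in>{..<a + b}. Z2Z4_orders a j = Z2Z4_orders a' s}"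
proof -
  have "{j\<in>{..<a + b}. Z2Z4_orders a j = 2} = {..<a}" "{j\<in>{..<a + b}. Z2Z4_orders a j = 4} = {a..<a + b}"
    by (auto simp: Z2Z4_orders_def)
  then show ?thesis using assms by (simp add: Z2Z4_orders_def)
qed

theorem theorem1p3:
  fixes q n :: nat
  assumes "q \<ge> 1" and "n \<ge> 5"
  shows "duplicator_wins q (q * n div 4)
           (Z2Z4_group (q * n) (q * n))
           (Z2Z4_group (q * (n - 2)) (q * (n + 1)))"
proof -
  let ?m = "q * n div 4"
  have m_le: "?m \<le> q * x" if "n \<le> 4 * x" for x
    using div_le_mono[OF mult_le_mono2[OF that, of q], of 4] by (simp add: ac_simps)
  have m_bounds: "?m \<le> q * (n - 2)" "?m \<le> q * n" "?m \<le> q * (n + 1)"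
    using \<open>n \<ge> 5\<close> by (auto intro!: m_le)
  have four: "(4::nat) ^ k = 2 ^ (2 * k)" for k by (simp add: power_mult)
  have "q * n + 2 * (q * n) = q * (n - 2) + 2 * (q * (n + 1))"
    using \<open>n \<ge> 5\<close> by (simp add: algebra_simps)
  then have "card (carrier (Z2Z4_group (q * n) (q * n))) =
               card (carrier (Z2Z4_group (q * (n - 2)) (q * (n + 1))))"
    unfolding card_carrier_Z2Z4_group four by (simp only: power_add[symmetric])
  then show ?thesis
    unfolding Z2Z4_group_eq_cyclic_product
    using m_bounds
    by (intro duplicator_wins_cyclic_products Z2Z4_orders_range le_card_Z2Z4_orders)
qed

end
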